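(* Let $T:\mathbf{Set}\to\mathbf{Set}$ be a functor, let $\lambda/n$ and $\lambda'/n'$ be monotone singleton-preserving predicate liftings for $T$, let $S$ be an equivalence relation on a set $X$, let $A_1,\dots,A_n\subseteq X$ each be an $S$-equivalence class or empty, and let $B_1,\dots,B_{n'}\subseteq X$ be $S$-closed (unions of $S$-equivalence classes). Then: (1) $\lambda_X(A_1,\dots,A_n)\subseteq\lambda'_X(B_1,\dots,B_{n'})$ or $\lambda_X(A_1,\dots,A_n)\cap\lambda'_X(B_1,\dots,B_{n'})=\varnothing$. (2) If moreover each $B_j$ is an $S$-equivalence class or empty, then $\lambda_X(A_1,\dots,A_n)=\lambda'_X(B_1,\dots,B_{n'})$ or $\lambda_X(A_1,\dots,A_n)\cap\lambda'_X(B_1,\dots,B_{n'})=\varnothing$.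
   Context: An $n$-ary predicate lifting for $T$ is a family $\lambda_X:(\mathcal{P}X)^n\to\mathcal{P}(TX)$ natural w.r.t. preimages: $\lambda_X(f^{-1}[A_1],\dots,f^{-1}[A_n])=(Tf)^{-1}[\lambda_Y(A_1,\dots,A_n)]$ for every $f:X\to Y$ and $A_i\subseteq Y$. It is monotone if each $\lambda_X$ is monotone w.r.t. inclusion in every argument, and preserves singletons if $|\lambda_X(\{x_1\},\dots,\{x_n\})|=1$ for all sets $X$ and $x_1,\dots,x_n\in X$. *)

theory Defs
  imports "HOL-Library.FuncSet"
begin

text \<open>A functor Set to Set, represented on the category whose objects are the
subsets X of a (arbitrary) ambient type 'a and whose morphisms X -> Y are
set-theoretic functions (functions agreeing on X are identified).
Tob X is the set T X (inside an ambient type 'b) and Tmap X Y f is T f.\<close>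

definition set_functor ::
  "('a set \<Rightarrow> 'b set) \<Rightarrow> ('a set \<Rightarrow> 'a set \<Rightarrow> ('a \<Rightarrow> 'a) \<Rightarrow> 'b \<Rightarrow> 'b) \<Rightarrow> bool" where
  "set_functor Tob Tmap \<longleftrightarrow>
     (\<forall>X Y f. f \<in> X \<rightarrow> Y \<longrightarrow> Tmap X Y f \<in> Tob X \<rightarrow> Tob Y) \<and>
     (\<forall>X Y f g. f \<in> X \<rightarrow> Y \<longrightarrow> (\<forall>x\<in>X. f x = g x) \<longrightarrow>
        (\<forall>t\<in>Tob X. Tmap X Y f t = Tmap X Y g t)) \<and>
     (\<forall>X. \<forall>t\<in>Tob X. Tmap X X id t = t) \<and>
     (\<forall>X Y Z f g. f \<in> X \<rightarrow> Y \<longrightarrow> g \<in> Y \<rightarrow> Z \<longrightarrow>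
        (\<forall>t\<in>Tob X. Tmap X Z (g \<circ> f) t = Tmap Y Z g (Tmap X Y f t)))"

definition predicate_lifting ::
  "('a set \<Rightarrow> 'b set) \<Rightarrow> ('a set \<Rightarrow> 'a set \<Rightarrow> ('a \<Rightarrow> 'a) \<Rightarrow> 'b \<Rightarrow> 'b) \<Rightarrow> nat
     \<Rightarrow> ('a set \<Rightarrow> 'a set list \<Rightarrow> 'b set) \<Rightarrow> bool" where
  "predicate_lifting Tob Tmap n lam \<longleftrightarrow>
     (\<forall>X As. length As = n \<longrightarrow> (\<forall>A\<in>set As. A \<subseteq> X) \<longrightarrow> lam X As \<subseteq> Tob X) \<and>
     (\<forall>X Y f As. f \<in> X \<rightarrow> Y \<longrightarrow> length As = n \<longrightarrow> (\<forall>A\<in>set As. A \<subseteq> Y) \<longrightarrow>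
        lam X (map (\<lambda>A. f -` A \<inter> X) As) = {t \<in> Tob X. Tmap X Y f t \<in> lam Y As})"

definition monotone_lifting :: "nat \<Rightarrow> ('a set \<Rightarrow> 'a set list \<Rightarrow> 'b set) \<Rightarrow> bool" where
  "monotone_lifting n lam \<longleftrightarrow>
     (\<forall>X As Bs. length As = n \<longrightarrow> length Bs = n \<longrightarrow> (\<forall>B\<in>set Bs. B \<subseteq> X) \<longrightarrow>
        (\<forall>i<n. As ! i \<subseteq> Bs ! i) \<longrightarrow> lam X As \<subseteq> lam X Bs)"

definition preserves_singletons :: "nat \<Rightarrow> ('a set \<Rightarrow> 'a set list \<Rightarrow> 'b set) \<Rightarrow> bool" where
  "preserves_singletons n lam \<longleftrightarrow>
     (\<forall>X xs. length xs = n \<longrightarrow> set xs \<subseteq> X \<longrightarrow> card (lam X (map (\<lambda>x. {x}) xs)) = 1)"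

definition S_closed :: "'a set \<Rightarrow> ('a \<times> 'a) set \<Rightarrow> 'a set \<Rightarrow> bool" where
  "S_closed X S B \<longleftrightarrow> (\<exists>C \<subseteq> X // S. B = \<Union>C)"

end

theory Submission
  imports Defs
begin

text \<open>Choose a map r on X whose fibres are exactly the S-classes. Every S-closed set B is then
the r-preimage of r ` B, so by naturality lambda_X(B_1, ..., B_n) is the (T r)-preimage of
lambda(r ` B_1, ..., r ` B_n). When every argument is a class or empty, the sets r ` A_i have at
most one element each.\<close>

lemma equiv_kernel_map_exists:
  assumes "equiv X S"
  shows "\<exists>r :: 'a \<Rightarrow> 'a. \<forall>x\<in>X. \<forall>z\<in>X. r x = r z \<longleftrightarrow> (x, z) \<in> S"
proof -
  define r where "r x = (SOME y. y \<in> S `` {x})" for x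
  have r_in_class: "r x \<in> S `` {x}" if "x \<in> X" for x
    unfolding r_def using equiv_class_self[OF assms that] by (rule someI)
  have "r x = r z \<longleftrightarrow> (x, z) \<in> S" if "x \<in> X" "z \<in> X" for x z
  proof
    assume "r x = r z"
    have "r x \<in> S `` {x} \<inter> S `` {z}"
      using r_in_class[OF that(1)] r_in_class[OF that(2)] unfolding \<open>r x = r z\<close> by (rule IntI)
    then show "(x, z) \<in> S"
      by (rule equiv_class_nondisjoint[OF assms])
  next
    assume "(x, z) \<in> S"
    then show "r x = r z"
      unfolding r_def using equiv_class_eq[OF assms] by simp
  qed
  then show ?thesis
    by blast
qed

lemma S_closed_quotient:
  assumes "A \<in> X // S"
  shows "S_closed X S A"
  unfolding S_closed_def using assms by (intro exI[of _ "{A}"]) auto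

lemma S_closed_empty: "S_closed X S {}"
  unfolding S_closed_def by (intro exI[of _ "{}"]) auto

lemma S_closed_subset:
  assumes "equiv X S" "S_closed X S B"
  shows "B \<subseteq> X"
  using assms Union_quotient unfolding S_closed_def by fastforce

lemma S_closed_vimage_image:
  assumes "equiv X S" and r: "\<forall>x\<in>X. \<forall>z\<in>X. r x = r z \<longleftrightarrow> (x, z) \<in> S"
    and "S_closed X S B"
  shows "r -` (r ` B) \<inter> X = B"
proof -
  obtain C where C: "C \<subseteq> X // S" "B = \<Union>C"
    using assms(3) unfolding S_closed_def by blast
  have BX: "B \<subseteq> X"
    using S_closed_subset[OF assms(1,3)] .
  have "x \<in> B" if x: "x \<in> X" and b: "b \<in> B" and rxb: "r x = r b" for x b
  proof -
    obtain D where D: "D \<in> C" "b \<in> D"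
      using C b by auto
    have "(b, x) \<in> S"
      using r[rule_format, OF subsetD[OF BX b] x] rxb by simp
    then have "x \<in> D"
      using in_quotient_imp_closed[OF assms(1)] C(1) D by blast
    then show ?thesis
      using C D by auto
  qed
  then show ?thesis
    using BX by auto
qed

lemma quotient_image_singleton:
  assumes "equiv X S" and r: "\<forall>x\<in>X. \<forall>z\<in>X. r x = r z \<longleftrightarrow> (x, z) \<in> S"
    and "A \<in> X // S" and "a \<in> A"
  shows "r ` A = {r a}"
proof -
  have "r x = r a" if "x \<in> A" for x
    using r in_quotient_imp_in_rel[OF assms(1,3), of x a] in_quotient_imp_subset[OF assms(1,3)]
      that assms(4) by blast
  then show ?thesis
    using assms(4) by blast
qed

lemma predicate_lifting_vimage:
  assumes "predicate_lifting Tob Tmap n lam" and "f \<in> X \<rightarrow> Y"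
    and "length Bs = n" and "\<forall>B\<in>set Bs. B \<subseteq> Y"
  shows "lam X (map (\<lambda>B. f -` B \<inter> X) Bs) = {t \<in> Tob X. Tmap X Y f t \<in> lam Y Bs}"
  using assms unfolding predicate_lifting_def by blast

lemma monotone_lifting_subsingleton:
  assumes mono: "monotone_lifting n lam" and single: "preserves_singletons n lam"
    and len: "length Cs = n" and sub: "\<forall>C\<in>set Cs. \<exists>y\<in>Y. C \<subseteq> {y}"
  shows "\<exists>u. lam Y Cs \<subseteq> {u}"
proof -
  obtain g where g: "\<forall>C\<in>set Cs. g C \<in> Y \<and> C \<subseteq> {g C}"
    using sub by metis
  have "lam Y Cs \<subseteq> lam Y (map (\<lambda>y. {y}) (map g Cs))"
    using mono[unfolded monotone_lifting_def, rule_format, of Cs "map (\<lambda>y. {y}) (map g Cs)" Y] g len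
    by auto
  moreover have "card (lam Y (map (\<lambda>y. {y}) (map g Cs))) = 1"
    using single[unfolded preserves_singletons_def, rule_format, of "map g Cs" Y] g len by auto
  then obtain u where "lam Y (map (\<lambda>y. {y}) (map g Cs)) = {u}"
    by (rule card_1_singletonE)
  ultimately show ?thesis
    by blast
qed

lemma predicate_lifting_S_closed:
  assumes "predicate_lifting Tob Tmap n lam" and "equiv X S"
    and r: "\<forall>x\<in>X. \<forall>z\<in>X. r x = r z \<longleftrightarrow> (x, z) \<in> S"
    and "length Bs = n" and "\<forall>B\<in>set Bs. S_closed X S B"
  shows "lam X Bs = {t \<in> Tob X. Tmap X UNIV r t \<in> lam UNIV (map ((`) r) Bs)}"
proof -
  have "map (\<lambda>B. r -` B \<inter> X) (map ((`) r) Bs) = Bs"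
    using S_closed_vimage_image[OF assms(2) r] assms(5) by (simp add: map_idI)
  then show ?thesis
    using predicate_lifting_vimage[OF assms(1), of r X UNIV "map ((`) r) Bs"] assms(4) by simp
qed

lemma lifting_image_classes_subsingleton:
  assumes "monotone_lifting n lam" and "preserves_singletons n lam" and "equiv X S"
    and r: "\<forall>x\<in>X. \<forall>z\<in>X. r x = r z \<longleftrightarrow> (x, z) \<in> S"
    and "length As = n" and classes: "\<forall>A\<in>set As. A \<in> X // S \<or> A = {}"
  shows "\<exists>u. lam UNIV (map ((`) r) As) \<subseteq> {u}"
proof (rule monotone_lifting_subsingleton[OF assms(1,2)])
  have "\<exists>y. r ` A \<subseteq> {y}" if "A \<in> set As" for A
  proof (cases "A = {}")
    case False
    then obtain a where "a \<in> A" by blast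
    then show ?thesis
      using classes that False quotient_image_singleton[OF assms(3) r] by blast
  qed simp
  then show "\<forall>C\<in>set (map ((`) r) As). \<exists>y\<in>UNIV. C \<subseteq> {y}"
    by simp
qed (use assms(5) in simp)

theorem mainTheorem5:
  fixes Tob :: "'a set \<Rightarrow> 'b set"
    and Tmap :: "'a set \<Rightarrow> 'a set \<Rightarrow> ('a \<Rightarrow> 'a) \<Rightarrow> 'b \<Rightarrow> 'b"
    and lam lam' :: "'a set \<Rightarrow> 'a set list \<Rightarrow> 'b set"
    and n n' :: nat
    and X :: "'a set" and S :: "('a \<times> 'a) set"
    and As Bs :: "'a set list"
  assumes "set_functor Tob Tmap"
    and "predicate_lifting Tob Tmap n lam" and "monotone_lifting n lam"
    and "preserves_singletons n lam"
    and "predicate_lifting Tob Tmap n' lam'" and "monotone_lifting n' lam'"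
    and "preserves_singletons n' lam'"
    and "equiv X S"
    and "length As = n" and "\<forall>A\<in>set As. A \<in> X // S \<or> A = {}"
    and "length Bs = n'" and "\<forall>B\<in>set Bs. S_closed X S B"
  shows "(lam X As \<subseteq> lam' X Bs \<or> lam X As \<inter> lam' X Bs = {}) \<and>
         ((\<forall>B\<in>set Bs. B \<in> X // S \<or> B = {}) \<longrightarrow>
            (lam X As = lam' X Bs \<or> lam X As \<inter> lam' X Bs = {}))"
proof -
  obtain r :: "'a \<Rightarrow> 'a" where r: "\<forall>x\<in>X. \<forall>z\<in>X. r x = r z \<longleftrightarrow> (x, z) \<in> S"
    using equiv_kernel_map_exists[OF assms(8)] by blast
  have "\<forall>A\<in>set As. S_closed X S A"
    using assms(10) S_closed_quotient S_closed_empty by blast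
  then have lam_As: "lam X As = {t \<in> Tob X. Tmap X UNIV r t \<in> lam UNIV (map ((`) r) As)}"
    using predicate_lifting_S_closed[OF assms(2,8) r assms(9)] by blast
  have lam'_Bs: "lam' X Bs = {t \<in> Tob X. Tmap X UNIV r t \<in> lam' UNIV (map ((`) r) Bs)}"
    using predicate_lifting_S_closed[OF assms(5,8) r assms(11,12)] .
  obtain u where u: "lam UNIV (map ((`) r) As) \<subseteq> {u}"
    using lifting_image_classes_subsingleton[OF assms(3,4,8) r assms(9,10)] by blast
  show ?thesis
  proof (intro conjI impI)
    show "lam X As \<subseteq> lam' X Bs \<or> lam X As \<inter> lam' X Bs = {}"
      using u unfolding lam_As lam'_Bs by (cases "u \<in> lam' UNIV (map ((`) r) Bs)") auto
  next
    assume "\<forall>B\<in>set Bs. B \<in> X // S \<or> B = {}"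
    then obtain v where v: "lam' UNIV (map ((`) r) Bs) \<subseteq> {v}"
      using lifting_image_classes_subsingleton[OF assms(6,7,8) r assms(11)] by blast
    show "lam X As = lam' X Bs \<or> lam X As \<inter> lam' X Bs = {}"
      using u v unfolding lam_As lam'_Bs by (cases "u = v") (auto simp: subset_singleton_iff)
  qed
qed

end
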